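(* Let $\alpha\ge1$ and $p$ be integers with $1\le p\le\alpha^2$, and let $c$ be real with $1\le c\le p\gamma/\alpha$. Then, as $r\to\infty$, $$n_{c,r}^{-1}|S_p\cap[n_{c,r}]|=\tfrac12 c^{-1}\left(1-(\alpha\gamma)^{-1}p\right)^2+O(\gamma^{-r}).$$ In particular, for $p=\alpha^2$ and $1\le c\le\alpha\gamma$, $$n_{c,r}^{-1}|S_p\cap[n_{c,r}]|=\tfrac12c^{-1}\gamma^{-4}+O(\gamma^{-r}).$$
   Context: Here $\beta=1$. For a positive integer $\alpha$ and positive integers $a_1,a_2$, the $(\alpha,1)$-walk $w_k(a_1,a_2)$ is given by $w_1=a_1$, $w_2=a_2$, $w_{k+2}=\alpha w_{k+1}+w_k$ ($k\ge1$). For a positive integer $n$, $s(n;a_1,a_2)$ is the (largest) index $s$ with $w_s(a_1,a_2)=n$ ($-\infty$ if none), and $s(n)=\max_{a_1,a_2\ge1}s(n;a_1,a_2)$. A pair of positive integers $(a_1,a_2)$ is $n$-good if $s(n;a_1,a_2)=s(n)$; $p(n)$ is the number of $n$-good pairs (possibly infinite). $S_p=\{m\ge1:p(m)>p\}$. Let $\gamma=\frac12(\alpha+\sqrt{\alpha^2+4})$, $\lambda=\frac12(\alpha-\sqrt{\alpha^2+4})$, and $n_{c,r}=\left\lfloor\frac{c}{(\gamma-\lambda)^2}\gamma^{2r+1}\right\rfloor$. $[N]=\{1,\dots,N\}$. *)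

theory Defs
  imports "HOL-Analysis.Analysis" "HOL-Library.Extended_Nat" "HOL-Library.Landau_Symbols"
begin

text \<open>The (alpha,1)-walk, indexed from 1: walk al a b 1 = a, walk al a b 2 = b,
  w(k+2) = al * w(k+1) + w(k). The value at index 0 is irrelevant (set to 0).\<close>
fun walk :: "nat \<Rightarrow> nat \<Rightarrow> nat \<Rightarrow> nat \<Rightarrow> nat" where
  "walk al a b 0 = 0"
| "walk al a b (Suc 0) = a"
| "walk al a b (Suc (Suc 0)) = b"
| "walk al a b (Suc (Suc (Suc k))) = al * walk al a b (Suc (Suc k)) + walk al a b (Suc k)"

text \<open>s(n;a1,a2): largest index s >= 1 with w_s = n; None encodes minus infinity.\<close>
definition sidx :: "nat \<Rightarrow> nat \<Rightarrow> nat \<Rightarrow> nat \<Rightarrow> nat option" where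
  "sidx al n a b = (if {k. 1 \<le> k \<and> walk al a b k = n} = {} then None
                    else Some (Max {k. 1 \<le> k \<and> walk al a b k = n}))"

text \<open>s(n) = max over positive a1,a2 of s(n;a1,a2) (always >= 1 since w_1 = a1).\<close>
definition smax :: "nat \<Rightarrow> nat \<Rightarrow> nat" where
  "smax al n = Max {k. 1 \<le> k \<and> (\<exists>a b. 1 \<le> a \<and> 1 \<le> b \<and> walk al a b k = n)}"

definition good_pairs :: "nat \<Rightarrow> nat \<Rightarrow> (nat \<times> nat) set" where
  "good_pairs al n = {(a, b). 1 \<le> a \<and> 1 \<le> b \<and> sidx al n a b = Some (smax al n)}"

definition pcount :: "nat \<Rightarrow> nat \<Rightarrow> enat" where
  "pcount al n = (if finite (good_pairs al n) then enat (card (good_pairs al n)) else \<infinity>)"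

definition Sp :: "nat \<Rightarrow> nat \<Rightarrow> nat set" where
  "Sp al p = {m. 1 \<le> m \<and> pcount al m > enat p}"

definition gam :: "nat \<Rightarrow> real" where
  "gam al = (real al + sqrt (real al ^ 2 + 4)) / 2"

definition lam :: "nat \<Rightarrow> real" where
  "lam al = (real al - sqrt (real al ^ 2 + 4)) / 2"

definition ncr :: "nat \<Rightarrow> real \<Rightarrow> nat \<Rightarrow> nat" where
  "ncr al c r = nat \<lfloor>c / (gam al - lam al)^2 * gam al ^ (2 * r + 1)\<rfloor>"

end

theory Submission
  imports Defs
begin

fun gfib :: "nat \<Rightarrow> nat \<Rightarrow> nat" where
  "gfib al 0 = 0"
| "gfib al (Suc 0) = 1"
| "gfib al (Suc (Suc k)) = al * gfib al (Suc k) + gfib al k"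

lemma walk_eq_gfib: "walk al a b (Suc (Suc k)) = gfib al k * a + gfib al (Suc k) * b"
proof (induction k rule: induct_nat_012)
  case (ge2 k)
  then show ?case
    by (simp only: walk.simps(4) gfib.simps(3)) (simp add: algebra_simps)
qed simp_all

lemma walk_Suc_shift: "walk al x y (Suc (Suc k)) = walk al y (al * y + x) (Suc k)"
  by (cases k) (simp_all add: walk_eq_gfib algebra_simps)

lemma coprime_gfib_Suc: "coprime (gfib al k) (gfib al (Suc k))"
proof (induction k)
  case (Suc k)
  then show ?case
    using gcd_add_mult[of "gfib al (Suc k)" al "gfib al k"]
    by (simp add: coprime_iff_gcd_eq_1 gcd.commute)
qed simp

lemma gfib_le_Suc: "1 \<le> al \<Longrightarrow> gfib al k \<le> gfib al (Suc k)"
  by (cases k) (simp_all add: trans_le_add1)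

lemma gfib_mono:
  assumes "1 \<le> al" "i \<le> k" shows "gfib al i \<le> gfib al k"
  using assms(2) by (induction k rule: dec_induct) (auto intro: order.trans gfib_le_Suc[OF assms(1)])

lemma gfib_pos: "1 \<le> al \<Longrightarrow> 1 \<le> k \<Longrightarrow> 1 \<le> gfib al k"
  using gfib_mono[of al 1 k] by simp

lemma gfib_Suc_ge:
  assumes "1 \<le> al" shows "k \<le> gfib al (Suc k)"
proof (induction k rule: induct_nat_012)
  case (ge2 k)
  let ?x = "al * gfib al (Suc k) + gfib al k"
  have "?x \<le> al * ?x" using assms by simp
  then show ?case
    using ge2 gfib_pos[OF assms, of "Suc k"] by (simp only: gfib.simps(3)) linarith
qed (use assms in simp_all)

lemma al_gfib_le_gfib_Suc: "al * gfib al j \<le> gfib al (Suc j)"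
  by (cases j) simp_all

definition pos_solutions :: "nat \<Rightarrow> nat \<Rightarrow> nat \<Rightarrow> (nat \<times> nat) set" where
  "pos_solutions A B n = {(x, y). 1 \<le> x \<and> 1 \<le> y \<and> A * x + B * y = n}"

lemma finite_pos_solutions:
  assumes "1 \<le> A" "1 \<le> B" shows "finite (pos_solutions A B n)"
proof (rule finite_subset)
  have "x \<le> n \<and> y \<le> n" if "A * x + B * y = n" for x y
  proof -
    have "x \<le> A * x" "y \<le> B * y" using assms by simp_all
    then show ?thesis using that by linarith
  qed
  then show "pos_solutions A B n \<subseteq> {..n} \<times> {..n}"
    by (auto simp: pos_solutions_def)
qed simp

lemma pos_solutions_reduced:
  assumes "(x, y) \<in> pos_solutions A B n" "1 \<le> B"
  obtains a b where "1 \<le> a" "a \<le> B" "1 \<le> b" "n = A * a + B * b"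
proof
  define q r where "q = (x - 1) div B" and "r = (x - 1) mod B"
  have x: "x = B * q + r + 1" and y: "1 \<le> y" "A * x + B * y = n"
    using assms(1) by (auto simp: pos_solutions_def q_def r_def)
  show "1 \<le> r + 1" "1 \<le> y + A * q" using y by simp_all
  show "r + 1 \<le> B" using assms(2) by (simp add: r_def Suc_leI)
  show "n = A * (r + 1) + B * (y + A * q)"
    using y(2) unfolding x by (simp add: algebra_simps)
qed

lemma pos_solutions_eq_progression:
  assumes cop: "coprime A B" and A: "1 \<le> A" and a: "1 \<le> a" "a \<le> B" and b: "1 \<le> b"
  shows "pos_solutions A B (A * a + B * b) = (\<lambda>t. (a + t * B, b - t * A)) ` {..(b - 1) div A}"
proof (intro set_eqI iffI)
  fix z assume "z \<in> pos_solutions A B (A * a + B * b)"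
  then obtain x y where z: "z = (x, y)" "1 \<le> x" "1 \<le> y" "A * x + B * y = A * a + B * b"
    by (auto simp: pos_solutions_def)
  have eq: "int A * (int x - int a) = int B * (int b - int y)"
    using arg_cong[OF z(4), of int] by (simp add: algebra_simps)
  then have "int B dvd int A * (int x - int a)" by simp
  then have "int B dvd int x - int a"
    using cop by (simp add: coprime_commute coprime_dvd_mult_right_iff)
  then obtain t where t: "int x - int a = int B * t" by (elim dvdE)
  have "0 \<le> t"
  proof (rule ccontr)
    assume "\<not> 0 \<le> t"
    then have "int B * t \<le> int B * (-1)" by (intro mult_left_mono) auto
    then show False using t a z(2) by linarith
  qed
  then obtain s where s: "t = int s" using nonneg_int_cases by blast
  have B: "0 < B" using a by simp
  have "int B * (int A * int s) = int B * (int b - int y)" using eq t s by (simp add: algebra_simps)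
  then have "int A * int s = int b - int y" using B by simp
  then have "int (s * A) < int b" "int x = int (a + s * B)" "int y = int b - int (s * A)"
    using t s z(3) by (simp_all add: algebra_simps)
  then have "s * A < b" "x = a + s * B" "int y = int (b - s * A)"
    by (simp_all only: of_nat_less_iff of_nat_eq_iff of_nat_diff less_imp_le)
  then have "s * A \<le> b - 1" "x = a + s * B" "y = b - s * A" by (simp_all only: of_nat_eq_iff)
  then show "z \<in> (\<lambda>t. (a + t * B, b - t * A)) ` {..(b - 1) div A}"
    using z(1) A by (auto simp: less_eq_div_iff_mult_less_eq)
next
  fix z assume "z \<in> (\<lambda>t. (a + t * B, b - t * A)) ` {..(b - 1) div A}"
  then obtain t where z: "z = (a + t * B, b - t * A)" and "t \<le> (b - 1) div A" by auto
  then have "t * A \<le> b - 1" using A by (simp add: less_eq_div_iff_mult_less_eq)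
  then have "B * (b - t * A) + B * (t * A) = B * b" by (simp flip: add_mult_distrib2)
  then have "A * (a + t * B) + B * (b - t * A) = A * a + B * b"
    by (simp add: add_mult_distrib2 mult.commute mult.left_commute)
  then show "z \<in> pos_solutions A B (A * a + B * b)"
    using z a b \<open>t * A \<le> b - 1\<close> by (auto simp: pos_solutions_def)
qed

lemma card_pos_solutions:
  assumes "coprime A B" "1 \<le> A" "1 \<le> a" "a \<le> B" "1 \<le> b"
  shows "card (pos_solutions A B (A * a + B * b)) = (b - 1) div A + 1"
proof -
  have "inj_on (\<lambda>t. (a + t * B, b - t * A)) {..(b - 1) div A}"
    using assms(3,4) by (auto intro!: inj_onI)
  then show ?thesis by (simp add: pos_solutions_eq_progression[OF assms] card_image)
qed

context
  fixes al :: nat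
  assumes al: "1 \<le> al"
begin

lemma walk_index_le:
  assumes "1 \<le> b" shows "k \<le> walk al a b k + 2"
proof (cases "k \<le> 2")
  case False
  then obtain j where k: "k = Suc (Suc j)" by (metis add_2_eq_Suc le_add_diff_inverse nat_le_linear)
  have "gfib al (Suc j) \<le> gfib al (Suc j) * b" using assms by simp
  also have "\<dots> \<le> walk al a b k" by (simp add: k walk_eq_gfib)
  finally show ?thesis using gfib_Suc_ge[OF al, of j] k by simp
qed simp

lemma finite_walk_indices:
  "finite {k. 1 \<le> k \<and> (\<exists>a b. 1 \<le> a \<and> 1 \<le> b \<and> walk al a b k = n)}"
  by (rule finite_subset[of _ "{..n + 2}"]) (use walk_index_le in fastforce)+

lemma smax_ge:
  assumes "1 \<le> k" "1 \<le> a" "1 \<le> b" "walk al a b k = n" shows "k \<le> smax al n"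
  unfolding smax_def using assms by (intro Max_ge[OF finite_walk_indices]) blast

lemma smax_attained:
  assumes "1 \<le> n"
  shows "1 \<le> smax al n" "\<exists>a b. 1 \<le> a \<and> 1 \<le> b \<and> walk al a b (smax al n) = n"
proof -
  let ?S = "{k. 1 \<le> k \<and> (\<exists>a b. 1 \<le> a \<and> 1 \<le> b \<and> walk al a b k = n)}"
  have "walk al n 1 1 = n" by simp
  then have "1 \<in> ?S" using assms by blast
  then have "smax al n \<in> ?S" unfolding smax_def using Max_in[OF finite_walk_indices] by blast
  then show "1 \<le> smax al n" "\<exists>a b. 1 \<le> a \<and> 1 \<le> b \<and> walk al a b (smax al n) = n" by auto
qed

lemma sidx_eq_smax_iff:
  assumes "1 \<le> n" "1 \<le> a" "1 \<le> b"
  shows "sidx al n a b = Some (smax al n) \<longleftrightarrow> walk al a b (smax al n) = n"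
proof -
  let ?K = "{k. 1 \<le> k \<and> walk al a b k = n}"
  have fin: "finite ?K"
    by (rule finite_subset[of _ "{..n + 2}"]) (use walk_index_le[OF assms(3)] in fastforce)+
  show ?thesis
  proof
    assume "sidx al n a b = Some (smax al n)"
    then have "?K \<noteq> {}" "Max ?K = smax al n" by (auto simp: sidx_def split: if_splits)
    then show "walk al a b (smax al n) = n" using Max_in[OF fin] by fastforce
  next
    assume "walk al a b (smax al n) = n"
    then have K: "smax al n \<in> ?K" using smax_attained(1)[OF assms(1)] by simp
    moreover have "Max ?K \<in> ?K" using Max_in[OF fin] K by blast
    then have "Max ?K \<le> smax al n" using assms smax_ge[of "Max ?K" a b n] by simp
    ultimately have "Max ?K = smax al n" using Max_ge[OF fin] by (blast intro: antisym)
    then show "sidx al n a b = Some (smax al n)" using K by (auto simp: sidx_def)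
  qed
qed

lemma good_pairs_eq:
  assumes "1 \<le> n"
  shows "good_pairs al n = {(a, b). 1 \<le> a \<and> 1 \<le> b \<and> walk al a b (smax al n) = n}"
  using sidx_eq_smax_iff[OF assms] by (auto simp: good_pairs_def)

lemma good_pairs_eq_pos_solutions:
  assumes "1 \<le> n" "smax al n = Suc (Suc j)"
  shows "good_pairs al n = pos_solutions (gfib al j) (gfib al (Suc j)) n"
  using assms by (simp add: good_pairs_eq pos_solutions_def walk_eq_gfib)

lemma walk_shift_many:
  assumes "1 \<le> k" "1 \<le> x" "1 \<le> y"
  shows "\<exists>x' y'. 1 \<le> x' \<and> 1 \<le> y' \<and> walk al x y (k + d) = walk al x' y' k"
  using assms(2,3)
proof (induction d arbitrary: x y)
  case (Suc d)
  have "walk al x y (k + Suc d) = walk al y (al * y + x) (k + d)"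
    using assms(1) walk_Suc_shift[of al x y "k + d - 1"] by simp
  then show ?case using Suc.IH[of y "al * y + x"] Suc.prems by auto
qed auto

lemma smax_le_of_reduced:
  assumes j: "1 \<le> j" and a: "1 \<le> a" "a \<le> gfib al (Suc j)" and b: "1 \<le> b" "b \<le> al * a"
    and n: "n = gfib al j * a + gfib al (Suc j) * b"
  shows "smax al n \<le> Suc (Suc j)"
proof (rule ccontr)
  let ?A = "gfib al j" and ?B = "gfib al (Suc j)"
  assume "\<not> smax al n \<le> Suc (Suc j)"
  then have "Suc (Suc (Suc j)) \<le> smax al n" by simp
  then obtain d where d: "smax al n = Suc (Suc (Suc j)) + d" using le_Suc_ex by blast
  have "1 \<le> n" using n b(1) gfib_pos[OF al, of "Suc j"] by (simp add: trans_le_add2)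
  then obtain x y where "1 \<le> x" "1 \<le> y" "walk al x y (smax al n) = n"
    using smax_attained by blast
  then obtain x' y' where xy': "1 \<le> x'" "1 \<le> y'" "walk al x' y' (Suc (Suc (Suc j))) = n"
    using walk_shift_many[of "Suc (Suc (Suc j))" x y d] d by auto
  have "walk al x' y' (Suc (Suc (Suc j))) = ?A * y' + ?B * (al * y' + x')"
    by (simp add: walk_eq_gfib algebra_simps)
  then have "(y', al * y' + x') \<in> pos_solutions ?A ?B (?A * a + ?B * b)"
    using xy' n by (simp add: pos_solutions_def)
  then have "(y', al * y' + x') \<in> (\<lambda>t. (a + t * ?B, b - t * ?A)) ` {..(b - 1) div ?A}"
    by (simp only: pos_solutions_eq_progression[OF coprime_gfib_Suc gfib_pos[OF al j] a b(1)])
  then obtain t where t: "y' = a + t * ?B" "al * y' + x' = b - t * ?A" by blast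
  have "al * a \<le> al * y'" using t(1) by simp
  then show False using t(2) b(2) xy'(1) by linarith
qed

lemma smax_gt_of_unreduced:
  assumes "1 \<le> a" "al * a < b" "n = gfib al j * a + gfib al (Suc j) * b"
  shows "Suc (Suc j) < smax al n"
proof -
  have "walk al (b - al * a) a (Suc (Suc (Suc j))) = walk al a b (Suc (Suc j))"
    using assms(2) by (simp only: walk_Suc_shift) simp
  then show ?thesis
    using assms by (intro Suc_le_lessD smax_ge) (auto simp: walk_eq_gfib)
qed

text \<open>The pair \<open>(b - \<alpha> a, a)\<close> is a positive predecessor of \<open>(a, b)\<close> exactly when \<open>b > \<alpha> a\<close>;
  without one, \<open>a \<le> G (j + 1)\<close> keeps every other walk from reaching \<open>n\<close> at a later index.\<close>

lemma smax_eq_iff_reduced: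
  assumes "1 \<le> j" "1 \<le> a" "a \<le> gfib al (Suc j)" "1 \<le> b"
    and n: "n = gfib al j * a + gfib al (Suc j) * b"
  shows "smax al n = Suc (Suc j) \<longleftrightarrow> b \<le> al * a"
proof
  show "b \<le> al * a" if "smax al n = Suc (Suc j)"
    using that smax_gt_of_unreduced[OF assms(2) _ n] by (metis less_irrefl not_le)
  show "smax al n = Suc (Suc j)" if "b \<le> al * a"
    using smax_le_of_reduced[OF assms(1-4) that n] smax_ge[of "Suc (Suc j)" a b n] assms
    by (simp add: walk_eq_gfib)
qed

end

lemma enat_less_pcount_iff:
  "finite (good_pairs al n) \<Longrightarrow> enat p < pcount al n \<longleftrightarrow> p < card (good_pairs al n)"
  by (simp add: pcount_def)

text \<open>An element \<open>n\<close> of \<open>S\<^sub>p\<close> with \<open>s(n) = j + 2\<close> is encoded by its good pair \<open>(a, b)\<close> with least \<open>a\<close>;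
  these pairs make up \<open>Sp_reps al p j\<close>, and \<open>n = level_val al j (a, b)\<close>.\<close>

definition Sp_reps :: "nat \<Rightarrow> nat \<Rightarrow> nat \<Rightarrow> (nat \<times> nat) set" where
  "Sp_reps al p j = {(a, b). 1 \<le> a \<and> a \<le> gfib al (Suc j) \<and> p * gfib al j < b \<and> b \<le> al * a}"

definition level_val :: "nat \<Rightarrow> nat \<Rightarrow> nat \<times> nat \<Rightarrow> nat" where
  "level_val al j = (\<lambda>(a, b). gfib al j * a + gfib al (Suc j) * b)"

context
  fixes al :: nat
  assumes al: "1 \<le> al"
begin

lemma good_pairs_reduced:
  assumes j: "1 \<le> j" and a: "1 \<le> a" "a \<le> gfib al (Suc j)" and b: "1 \<le> b" "b \<le> al * a"
  shows "finite (good_pairs al (level_val al j (a, b)))"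
    and "card (good_pairs al (level_val al j (a, b))) = (b - 1) div gfib al j + 1"
proof -
  let ?A = "gfib al j" and ?B = "gfib al (Suc j)"
  have n: "level_val al j (a, b) = ?A * a + ?B * b" by (simp add: level_val_def)
  have A: "1 \<le> ?A" and B: "1 \<le> ?B" using gfib_pos[OF al] j by simp_all
  have "1 \<le> ?A * a + ?B * b" using B b(1) by (simp add: trans_le_add2)
  then have "good_pairs al (level_val al j (a, b)) = pos_solutions ?A ?B (?A * a + ?B * b)"
    using good_pairs_eq_pos_solutions[OF al] smax_eq_iff_reduced[OF al j a b(1) n] b(2) n by simp
  then show "finite (good_pairs al (level_val al j (a, b)))"
    and "card (good_pairs al (level_val al j (a, b))) = (b - 1) div ?A + 1"
    using finite_pos_solutions[OF A B] card_pos_solutions[OF coprime_gfib_Suc A a b(1)] by simp_all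
qed

lemma level_val_in_Sp:
  assumes "1 \<le> j" "z \<in> Sp_reps al p j" shows "level_val al j z \<in> Sp al p"
proof -
  obtain a b where z: "z = (a, b)" "1 \<le> a" "a \<le> gfib al (Suc j)" "p * gfib al j < b" "b \<le> al * a"
    using assms(2) by (auto simp: Sp_reps_def)
  have "p \<le> (b - 1) div gfib al j"
    using z(4) gfib_pos[OF al assms(1)] by (simp add: less_eq_div_iff_mult_less_eq)
  moreover have "1 \<le> level_val al j z"
    using z gfib_pos[OF al, of "Suc j"] by (simp add: level_val_def trans_le_add2)
  ultimately show ?thesis
    using good_pairs_reduced[OF assms(1) z(2,3) _ z(5)] z(1,4)
    by (simp add: Sp_def enat_less_pcount_iff)
qed

lemma Sp_level_rep:
  assumes "n \<in> Sp al p" "al < n"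
  obtains j z where "1 \<le> j" "z \<in> Sp_reps al p j" "n = level_val al j z"
proof -
  have n: "1 \<le> n" and pc: "enat p < pcount al n" using assms(1) by (auto simp: Sp_def)
  have "walk al (n - al) 1 3 = n" using assms(2) by (simp add: numeral_eq_Suc walk_eq_gfib)
  then have "3 \<le> smax al n" using assms(2) by (intro smax_ge[OF al]) auto
  define j where "j = smax al n - 2"
  then have sj: "smax al n = Suc (Suc j)" and j: "1 \<le> j" using \<open>3 \<le> smax al n\<close> by simp_all
  let ?A = "gfib al j" and ?B = "gfib al (Suc j)"
  have gp: "good_pairs al n = pos_solutions ?A ?B n"
    using good_pairs_eq_pos_solutions[OF al n sj] .
  obtain x y where "(x, y) \<in> good_pairs al n"
    using smax_attained(2)[OF al n] good_pairs_eq[OF al n] by auto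
  then obtain a b where a: "1 \<le> a" "a \<le> ?B" and b: "1 \<le> b" and nab: "n = ?A * a + ?B * b"
    using gp gfib_pos[OF al, of "Suc j"] by (auto elim: pos_solutions_reduced)
  then have bal: "b \<le> al * a" using smax_eq_iff_reduced[OF al j a b nab] sj by simp
  have nz: "n = level_val al j (a, b)" using nab by (simp add: level_val_def)
  have "p < (b - 1) div ?A + 1"
    using pc good_pairs_reduced[OF j a b bal] nz by (simp add: enat_less_pcount_iff)
  then have "p * ?A \<le> b - 1"
    using gfib_pos[OF al j] by (simp add: less_Suc_eq_le less_eq_div_iff_mult_less_eq)
  then have "p * ?A < b" using b by linarith
  then show thesis using that[OF j _ nz] a bal by (simp add: Sp_reps_def)
qed

lemma level_val_inj:
  assumes j: "1 \<le> j" "1 \<le> j'" and z: "z \<in> Sp_reps al p j" "z' \<in> Sp_reps al p j'"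
    and eq: "level_val al j z = level_val al j' z'"
  shows "j = j' \<and> z = z'"
proof -
  obtain a b a' b' where ab: "z = (a, b)" "1 \<le> a" "a \<le> gfib al (Suc j)" "1 \<le> b" "b \<le> al * a"
    and ab': "z' = (a', b')" "1 \<le> a'" "a' \<le> gfib al (Suc j')" "1 \<le> b'" "b' \<le> al * a'"
    using z by (auto simp: Sp_reps_def)
  let ?A = "gfib al j" and ?B = "gfib al (Suc j)"
  have "smax al (level_val al j z) = Suc (Suc j)" "smax al (level_val al j' z') = Suc (Suc j')"
    using smax_eq_iff_reduced[OF al j(1) ab(2-4)] smax_eq_iff_reduced[OF al j(2) ab'(2-4)] ab ab'
    by (simp_all add: level_val_def)
  then have jj: "j = j'" using eq by simp
  then have "(a', b') \<in> pos_solutions ?A ?B (?A * a + ?B * b)"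
    using eq ab ab' by (simp add: level_val_def pos_solutions_def)
  then obtain t where "a' = a + t * ?B" "b' = b - t * ?A"
    using pos_solutions_eq_progression[OF coprime_gfib_Suc gfib_pos[OF al j(1)] ab(2,3,4)] by auto
  moreover have "t = 0"
    using \<open>a' = a + t * ?B\<close> ab(2) ab'(3) jj gfib_pos[OF al, of "Suc j"]
    by (cases t) auto
  ultimately show ?thesis using ab ab' jj by simp
qed

end

definition level_count :: "nat \<Rightarrow> nat \<Rightarrow> nat \<Rightarrow> nat \<Rightarrow> nat" where
  "level_count al p j N = card {z \<in> Sp_reps al p j. level_val al j z \<le> N}"

lemma finite_Sp_reps: "finite (Sp_reps al p j)"
  by (rule finite_subset[of _ "{..gfib al (Suc j)} \<times> {..al * gfib al (Suc j)}"])
     (auto simp: Sp_reps_def intro: order.trans)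

lemma card_Sp_reps: "card (Sp_reps al p j) = (\<Sum>a = 1..gfib al (Suc j). al * a - p * gfib al j)"
proof -
  have "Sp_reps al p j = Sigma {1..gfib al (Suc j)} (\<lambda>a. {p * gfib al j<..al * a})"
    by (auto simp: Sp_reps_def)
  then show ?thesis by simp
qed

lemma level_count_le_card: "level_count al p j N \<le> card (Sp_reps al p j)"
  unfolding level_count_def by (rule card_mono[OF finite_Sp_reps]) auto

lemma level_val_le:
  assumes "z \<in> Sp_reps al p j"
  shows "level_val al j z \<le> gfib al (Suc j) * gfib al (Suc (Suc j))"
proof -
  let ?A = "gfib al j" and ?B = "gfib al (Suc j)"
  obtain a b where z: "z = (a, b)" and a: "a \<le> ?B" and b: "b \<le> al * a"
    using assms by (auto simp: Sp_reps_def)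
  have "b \<le> al * ?B" using b mult_le_mono2[OF a] by (rule order.trans)
  then have "?A * a + ?B * b \<le> ?A * ?B + ?B * (al * ?B)"
    using a by (intro add_mono mult_le_mono2)
  then show ?thesis by (simp add: z level_val_def algebra_simps)
qed

lemma level_count_eq_card:
  assumes "gfib al (Suc j) * gfib al (Suc (Suc j)) \<le> N"
  shows "level_count al p j N = card (Sp_reps al p j)"
proof -
  have "level_val al j z \<le> N" if "z \<in> Sp_reps al p j" for z
    using level_val_le[OF that] assms by (rule order.trans)
  then have "{z \<in> Sp_reps al p j. level_val al j z \<le> N} = Sp_reps al p j" by blast
  then show ?thesis by (simp add: level_count_def)
qed

context
  fixes al :: nat
  assumes al: "1 \<le> al"
begin

lemma card_Sp_reps_le_level_count:
  shows "card (Sp_reps al p j)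
    \<le> level_count al p j N + (gfib al (Suc j) * gfib al (Suc (Suc j)) - N) + gfib al (Suc j)"
proof -
  let ?A = "gfib al j" and ?B = "gfib al (Suc j)"
  define M where "M = ?B * gfib al (Suc (Suc j)) - N"
  let ?X = "{z \<in> Sp_reps al p j. \<not> level_val al j z \<le> N}"
  have B: "0 < ?B" using gfib_pos[OF al, of "Suc j"] by simp
  have "card (Sp_reps al p j) = card ({z \<in> Sp_reps al p j. level_val al j z \<le> N} \<union> ?X)"
    by (rule arg_cong[where f = card]) blast
  also have "\<dots> \<le> level_count al p j N + card ?X"
    unfolding level_count_def by (rule card_Un_le)
  finally have split: "card (Sp_reps al p j) \<le> level_count al p j N + card ?X" .
  have "?X \<subseteq> {1..?B} \<times> {al * ?B - M div ?B..al * ?B}"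
  proof
    fix z assume "z \<in> ?X"
    then obtain a b where z: "z = (a, b)" and a: "1 \<le> a" "a \<le> ?B" and ba: "b \<le> al * a"
      and N: "N < ?A * a + ?B * b"
      by (auto simp: Sp_reps_def level_val_def)
    have b: "b \<le> al * ?B" using ba mult_le_mono2[OF a(2), of al] by linarith
    have "?A * a \<le> ?A * ?B" "?B * b \<le> ?B * (al * ?B)" using a b by simp_all
    moreover have "?B * gfib al (Suc (Suc j)) = ?B * (al * ?B) + ?A * ?B"
      by (simp add: algebra_simps)
    ultimately have "?B * (al * ?B) - ?B * b < M" using N unfolding M_def by linarith
    moreover have "(al * ?B - b) * ?B = ?B * (al * ?B) - ?B * b"
      by (simp add: diff_mult_distrib2 mult.commute)
    ultimately have "(al * ?B - b) * ?B \<le> M" by linarith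
    then have "al * ?B - b \<le> M div ?B" using B by (simp add: less_eq_div_iff_mult_less_eq)
    then show "z \<in> {1..?B} \<times> {al * ?B - M div ?B..al * ?B}" using z a b by auto
  qed
  then have "card ?X \<le> card ({1..?B} \<times> {al * ?B - M div ?B..al * ?B})"
    by (intro card_mono) auto
  also have "\<dots> \<le> ?B * (M div ?B + 1)"
    unfolding card_cartesian_product card_atLeastAtMost diff_Suc_1 by (intro mult_le_mono2) linarith
  also have "\<dots> \<le> M + ?B" by (simp add: algebra_simps)
  finally show ?thesis using split unfolding M_def by linarith
qed

lemma level_count_le:
  shows "level_count al p j N \<le> gfib al (Suc j) * (al * N div gfib al (Suc (Suc j)) - p * gfib al j)"
proof -
  let ?A = "gfib al j" and ?B = "gfib al (Suc j)" and ?C = "gfib al (Suc (Suc j))"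
  have C: "0 < ?C" using gfib_pos[OF al, of "Suc (Suc j)"] by (simp del: gfib.simps)
  have "{z \<in> Sp_reps al p j. level_val al j z \<le> N} \<subseteq> {1..?B} \<times> {p * ?A<..al * N div ?C}"
  proof
    fix z assume "z \<in> {z \<in> Sp_reps al p j. level_val al j z \<le> N}"
    then obtain a b where z: "z = (a, b)" and h: "1 \<le> a" "a \<le> ?B" "p * ?A < b" "b \<le> al * a"
      "?A * a + ?B * b \<le> N"
      by (auto simp: Sp_reps_def level_val_def)
    have "b * ?C \<le> al * (?A * a + ?B * b)"
      using mult_le_mono2[OF h(4), of ?A] by (simp add: algebra_simps)
    also have "\<dots> \<le> al * N" using h(5) by simp
    finally have "b \<le> al * N div ?C" using C by (simp add: less_eq_div_iff_mult_less_eq)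
    then show "z \<in> {1..?B} \<times> {p * ?A<..al * N div ?C}" using z h by auto
  qed
  then have "level_count al p j N \<le> card ({1..?B} \<times> {p * ?A<..al * N div ?C})"
    unfolding level_count_def by (intro card_mono) auto
  then show ?thesis by (simp add: card_cartesian_product)
qed

lemma level_val_index_le:
  assumes "z \<in> Sp_reps al p j" shows "j \<le> level_val al j z"
proof -
  obtain a b where z: "z = (a, b)" and b: "1 \<le> b" using assms by (auto simp: Sp_reps_def)
  have "j \<le> gfib al (Suc j)" by (rule gfib_Suc_ge[OF al])
  also have "\<dots> \<le> gfib al (Suc j) * b" using b by simp
  also have "\<dots> \<le> level_val al j z" by (simp add: z level_val_def)
  finally show ?thesis .
qed

lemma card_level_vals:
  assumes "1 \<le> j"
  shows "card (level_val al j ` {z \<in> Sp_reps al p j. level_val al j z \<le> N}) = level_count al p j N"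
proof -
  have "inj_on (level_val al j) (Sp_reps al p j)"
  proof (rule inj_onI)
    fix y z assume "y \<in> Sp_reps al p j" "z \<in> Sp_reps al p j" "level_val al j y = level_val al j z"
    then show "y = z" using level_val_inj[OF al assms assms] by simp
  qed
  then have "inj_on (level_val al j) {z \<in> Sp_reps al p j. level_val al j z \<le> N}"
    by (rule inj_on_subset) blast
  then show ?thesis unfolding level_count_def by (rule card_image)
qed

lemma card_Sp_level_counts_bounds:
  shows "(\<Sum>j = 1..N. level_count al p j N) \<le> card (Sp al p \<inter> {1..N})"
    and "card (Sp al p \<inter> {1..N}) \<le> al + (\<Sum>j = 1..N. level_count al p j N)"
proof -
  define V where "V j = level_val al j ` {z \<in> Sp_reps al p j. level_val al j z \<le> N}" for j
  define W where "W = (\<Union>j\<in>{1..N}. V j)"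
  have disj: "V i \<inter> V j = {}" if ij: "1 \<le> i" "1 \<le> j" "i \<noteq> j" for i j
  proof -
    have "level_val al i y \<noteq> level_val al j z" if "y \<in> Sp_reps al p i" "z \<in> Sp_reps al p j" for y z
    proof
      assume "level_val al i y = level_val al j z"
      then show False using level_val_inj[OF al ij(1,2) that] ij(3) by simp
    qed
    then show ?thesis unfolding V_def by blast
  qed
  have "card W = (\<Sum>j = 1..N. card (V j))"
    unfolding W_def
  proof (rule card_UN_disjoint)
    show "\<forall>j\<in>{1..N}. finite (V j)" by (simp add: V_def finite_Sp_reps)
    show "\<forall>i\<in>{1..N}. \<forall>j\<in>{1..N}. i \<noteq> j \<longrightarrow> V i \<inter> V j = {}" using disj by simp
  qed simp
  also have "\<dots> = (\<Sum>j = 1..N. level_count al p j N)"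
    by (rule sum.cong) (simp_all add: V_def card_level_vals)
  finally have card_W: "card W = (\<Sum>j = 1..N. level_count al p j N)" .
  have "W \<subseteq> Sp al p \<inter> {1..N}"
    unfolding W_def V_def using level_val_in_Sp[OF al] by (auto simp: Sp_def)
  then show "(\<Sum>j = 1..N. level_count al p j N) \<le> card (Sp al p \<inter> {1..N})"
    unfolding card_W[symmetric] by (intro card_mono) simp_all
  have "Sp al p \<inter> {1..N} \<subseteq> W \<union> {1..al}"
  proof
    fix n assume n: "n \<in> Sp al p \<inter> {1..N}"
    show "n \<in> W \<union> {1..al}"
    proof (cases "al < n")
      case True
      then obtain j z where jz: "1 \<le> j" "z \<in> Sp_reps al p j" "n = level_val al j z"
        using Sp_level_rep[OF al] n by blast
      then have "j \<le> N" using n level_val_index_le by fastforce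
      then show ?thesis using jz n unfolding W_def V_def by auto
    qed (use n in auto)
  qed
  then have "card (Sp al p \<inter> {1..N}) \<le> card (W \<union> {1..al})"
    by (rule card_mono[rotated]) (simp add: W_def V_def finite_Sp_reps)
  also have "\<dots> \<le> card W + card {1..al}" by (rule card_Un_le)
  finally show "card (Sp al p \<inter> {1..N}) \<le> al + (\<Sum>j = 1..N. level_count al p j N)"
    using card_W by simp
qed

lemma sum_card_Sp_reps_le:
  assumes "n \<le> N" and full: "gfib al n * gfib al (Suc n) \<le> N"
  shows "(\<Sum>j = 1..n. card (Sp_reps al p j)) \<le> card (Sp al p \<inter> {1..N})
           + (\<Sum>j = 1..n. gfib al (Suc j)) + (gfib al (Suc n) * gfib al (n + 2) - N)"
proof -
  define M where "M = gfib al (Suc n) * gfib al (n + 2) - N"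
  have per_level: "card (Sp_reps al p j)
      \<le> level_count al p j N + gfib al (Suc j) + (if j = n then M else 0)"
    if j: "j \<in> {1..n}" for j
  proof (cases "j = n")
    case True
    then show ?thesis using card_Sp_reps_le_level_count[of p j N] by (simp add: M_def)
  next
    case False
    have "gfib al (Suc j) \<le> gfib al n" "gfib al (Suc (Suc j)) \<le> gfib al (Suc n)"
      using j False by (intro gfib_mono[OF al]; simp)+
    then have "gfib al (Suc j) * gfib al (Suc (Suc j)) \<le> N"
      using full by (meson mult_le_mono order.trans)
    then show ?thesis using level_count_eq_card[of al j N p] False by simp
  qed
  have "(\<Sum>j = 1..n. card (Sp_reps al p j))
      \<le> (\<Sum>j = 1..n. level_count al p j N + gfib al (Suc j) + (if j = n then M else 0))"
    by (rule sum_mono) (rule per_level)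
  also have "\<dots> \<le> (\<Sum>j = 1..n. level_count al p j N) + (\<Sum>j = 1..n. gfib al (Suc j)) + M"
    by (simp add: sum.distrib)
  also have "(\<Sum>j = 1..n. level_count al p j N) \<le> (\<Sum>j = 1..N. level_count al p j N)"
    using assms(1) by (intro sum_mono2) auto
  also have "\<dots> \<le> card (Sp al p \<inter> {1..N})" by (rule card_Sp_level_counts_bounds(1))
  finally show ?thesis by (simp add: M_def)
qed

lemma card_Sp_le_sum_card_Sp_reps:
  assumes "Suc n \<le> N"
    and top: "al * N < (p * gfib al (Suc n) + p + 2) * gfib al (n + 3)"
    and beyond: "al * N < p * gfib al (n + 2) * gfib al (n + 4)"
  shows "card (Sp al p \<inter> {1..N}) \<le> al + (\<Sum>j = 1..n. card (Sp_reps al p j)) + (p + 1) * gfib al (n + 2)"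
proof -
  have empty: "level_count al p j N = 0" if j: "n + 2 \<le> j" for j
  proof -
    let ?C = "gfib al (Suc (Suc j))"
    have "gfib al (n + 2) \<le> gfib al j" "gfib al (n + 4) \<le> ?C"
      using j by (intro gfib_mono[OF al]; simp)+
    then have "p * gfib al (n + 2) * gfib al (n + 4) \<le> (p * gfib al j + 1) * ?C"
      by (intro mult_le_mono) (simp_all only: mult_le_mono2 trans_le_add1)
    then have "al * N < (p * gfib al j + 1) * ?C" using beyond by linarith
    moreover have "0 < ?C" using gfib_pos[OF al, of "Suc (Suc j)"] by linarith
    ultimately have "al * N div ?C < p * gfib al j + 1" by (simp only: div_less_iff_less_mult)
    then show ?thesis using level_count_le[of p j N] by simp
  qed
  have last: "level_count al p (Suc n) N \<le> (p + 1) * gfib al (n + 2)"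
  proof -
    have "0 < gfib al (n + 3)" using gfib_pos[OF al, of "n + 3"] by linarith
    then have "al * N div gfib al (n + 3) < p * gfib al (Suc n) + p + 2"
      using top by (simp only: div_less_iff_less_mult)
    then have "al * N div gfib al (n + 3) - p * gfib al (Suc n) \<le> p + 1" by linarith
    then have "gfib al (n + 2) * (al * N div gfib al (n + 3) - p * gfib al (Suc n))
        \<le> (p + 1) * gfib al (n + 2)"
      by (subst mult.commute) (rule mult_le_mono1)
    moreover have "level_count al p (Suc n) N
        \<le> gfib al (n + 2) * (al * N div gfib al (n + 3) - p * gfib al (Suc n))"
      using level_count_le[of p "Suc n" N]
      by (simp only: numeral_2_eq_2 numeral_3_eq_3 add_Suc_right add_0_right)
    ultimately show ?thesis by linarith
  qed
  have "(\<Sum>j = 1..N. level_count al p j N) = (\<Sum>j = 1..Suc n. level_count al p j N)"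
    using assms(1) empty by (intro sum.mono_neutral_right) auto
  also have "\<dots> \<le> (\<Sum>j = 1..n. card (Sp_reps al p j)) + (p + 1) * gfib al (n + 2)"
    using last level_count_le_card by (simp add: add_mono sum_mono)
  finally show ?thesis using card_Sp_level_counts_bounds(2)[of p N] by linarith
qed

end

lemma abs_mult_approx:
  fixes x y x0 y0 ex ey :: real
  assumes "\<bar>x - x0\<bar> \<le> ex" "\<bar>y - y0\<bar> \<le> ey"
  shows "\<bar>x * y - x0 * y0\<bar> \<le> \<bar>x0\<bar> * ey + \<bar>y0\<bar> * ex + ex * ey"
proof -
  have "x * y - x0 * y0 = x0 * (y - y0) + y0 * (x - x0) + (x - x0) * (y - y0)"
    by (simp add: algebra_simps)
  also have "\<bar>\<dots>\<bar> \<le> \<bar>x0\<bar> * \<bar>y - y0\<bar> + \<bar>y0\<bar> * \<bar>x - x0\<bar> + \<bar>x - x0\<bar> * \<bar>y - y0\<bar>"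
    using abs_triangle_ineq[of "x0 * (y - y0) + y0 * (x - x0)" "(x - x0) * (y - y0)"]
      abs_triangle_ineq[of "x0 * (y - y0)" "y0 * (x - x0)"]
    by (simp add: abs_mult)
  also have "\<dots> \<le> \<bar>x0\<bar> * ey + \<bar>y0\<bar> * ex + ex * ey"
    using assms by (intro add_mono mult_mono mult_left_mono) auto
  finally show ?thesis .
qed

lemma sum_truncated_linear:
  fixes al f m r :: nat
  assumes "r < al"
  shows "real (\<Sum>a = 1..f + m. al * a - (al * f + r)) = real al * real m * (real m + 1) / 2 - real r * real m"
proof (induction m)
  case 0
  have "al * a - (al * f + r) = 0" if "a \<le> f" for a
    using mult_le_mono2[OF that, of al] by (simp only: diff_is_0_eq trans_le_add1)
  then show ?case by simp
next
  case (Suc m)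
  have "al * (f + Suc m) - (al * f + r) = al * Suc m - r" by (simp add: algebra_simps)
  moreover have "r \<le> al * Suc m" using assms by simp
  ultimately have "real (al * (f + Suc m) - (al * f + r)) = real al * (real m + 1) - real r"
    by (simp add: of_nat_diff algebra_simps)
  then show ?case using Suc.IH by (simp add: field_simps)
qed

lemma sum_truncated_linear_approx:
  fixes al B P :: nat
  assumes al: "1 \<le> al" and P: "P \<le> al * B"
  shows "\<bar>real (\<Sum>a = 1..B. al * a - P) - (real al * real B - real P)^2 / (2 * real al)\<bar>
         \<le> real al * (real B + 1) / 2"
proof -
  define f r where "f = P div al" and "r = P mod al"
  have P_eq: "P = al * f + r" and r: "r < al" using al by (simp_all add: f_def r_def)
  then have "al * f \<le> al * B" using P by linarith
  then have fB: "f \<le> B" using al by simp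
  define m where "m = B - f"
  have B_eq: "B = f + m" using fB by (simp add: m_def)
  have alpos: "0 < real al" using al by simp
  have "real (\<Sum>a = 1..B. al * a - P) - (real al * real B - real P)^2 / (2 * real al)
      = real al * real m / 2 - (real r)^2 / (2 * real al)"
    unfolding B_eq P_eq sum_truncated_linear[OF r] using alpos
    by (simp add: field_simps power2_eq_square)
  moreover have "0 \<le> (real r)^2 / (2 * real al)" "(real r)^2 / (2 * real al) \<le> real al / 2"
    using r alpos by (simp_all add: divide_le_eq power2_eq_square mult_strict_mono less_imp_le)
  moreover have "0 \<le> real al * real m / 2" "real al * real m / 2 \<le> real al * real B / 2"
    using alpos by (simp_all add: m_def)
  moreover have "real al * (real B + 1) / 2 = real al * real B / 2 + real al / 2"
    by (simp add: field_simps)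
  ultimately show ?thesis unfolding abs_le_iff by linarith
qed

lemma sum_powers_times_diff:
  fixes x :: "'a :: comm_ring_1"
  shows "(\<Sum>j = 1..n. x ^ j) * (x - 1) = x ^ Suc n - x"
  by (induction n) (simp_all add: algebra_simps)

lemma sum_powers_le:
  fixes g :: real
  assumes "1 < g" shows "(\<Sum>j = 1..n. g ^ j) \<le> g / (g - 1) * g ^ n"
  using sum_powers_times_diff[of g n] assms by (simp add: field_simps)

lemma eventually_less_linear:
  fixes X :: "'a \<Rightarrow> real"
  assumes "filterlim X at_top F" "0 < C"
  shows "\<forall>\<^sub>F x in F. B < C * X x"
proof -
  have "\<forall>\<^sub>F x in F. (\<bar>B\<bar> + 1) / C \<le> X x" using assms(1) by (simp add: filterlim_at_top)
  then show ?thesis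
  proof eventually_elim
    case (elim x)
    then have "\<bar>B\<bar> + 1 \<le> C * X x" using assms(2) by (simp add: pos_divide_le_eq mult.commute)
    then show ?case by linarith
  qed
qed

lemma eventually_less_quadratic:
  fixes X :: "'a \<Rightarrow> real"
  assumes X: "filterlim X at_top F" and C: "0 < C"
  shows "\<forall>\<^sub>F x in F. A * X x + B < C * X x ^ 2"
  using eventually_less_linear[OF X C, of "\<bar>A\<bar> + \<bar>B\<bar>"] X[unfolded filterlim_at_top, rule_format, of 1]
proof eventually_elim
  case (elim x)
  have "A * X x \<le> \<bar>A\<bar> * X x" using elim(2) by (intro mult_right_mono) auto
  moreover have "B \<le> \<bar>B\<bar> * X x" using elim(2) mult_left_mono[OF elim(2), of "\<bar>B\<bar>"] by simp
  ultimately have "A * X x + B \<le> (\<bar>A\<bar> + \<bar>B\<bar>) * X x" by (simp add: algebra_simps)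
  also have "\<dots> < C * X x * X x" using elim by (intro mult_strict_right_mono) auto
  finally show ?case by (simp add: power2_eq_square)
qed

lemma bigo_sequentially_of_Suc:
  fixes f g :: "nat \<Rightarrow> real"
  assumes "(\<lambda>n. f (Suc n)) \<in> O(\<lambda>n. g (Suc n))" shows "f \<in> O(g)"
proof -
  obtain c where "\<forall>\<^sub>F n in sequentially. norm (f (Suc n)) \<le> c * norm (g (Suc n))"
    using assms by (elim landau_o.bigE) blast
  then have "\<forall>\<^sub>F n in sequentially. norm (f n) \<le> c * norm (g n)"
    using eventually_sequentially_Suc[of "\<lambda>n. norm (f n) \<le> c * norm (g n)"] by simp
  then show ?thesis by (rule bigoI)
qed

lemma quotient_bigo:
  fixes f N h e :: "'a \<Rightarrow> real"
  assumes f: "(\<lambda>x. f x - K * h x) \<in> O[F](e)" and N: "(\<lambda>x. N x - C * h x) \<in> O[F](e)"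
    and e: "e \<in> o[F](h)" and h: "\<forall>\<^sub>F x in F. h x \<noteq> 0" and C: "0 < C"
  shows "(\<lambda>x. f x / N x - K / C) \<in> O[F](\<lambda>x. e x / h x)"
proof -
  have "(\<lambda>x. N x - C * h x) \<in> o[F](h)" by (rule landau_o.big_small_trans[OF N e])
  then have "\<forall>\<^sub>F x in F. \<bar>N x - C * h x\<bar> \<le> C / 2 * \<bar>h x\<bar>"
    using landau_o.smallD[of _ F h "C / 2"] C by simp
  then have lower: "\<forall>\<^sub>F x in F. C / 2 * \<bar>h x\<bar> \<le> \<bar>N x\<bar>"
  proof eventually_elim
    case (elim x)
    have "\<bar>C * h x\<bar> \<le> \<bar>N x\<bar> + \<bar>N x - C * h x\<bar>" 
      using abs_triangle_ineq[of "N x" "C * h x - N x"] by (simp add: abs_minus_commute)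
    then show ?case using elim C by (simp add: abs_mult)
  qed
  have "\<forall>\<^sub>F x in F. f x / N x - K / C = (C * (f x - K * h x) - K * (N x - C * h x)) * (1 / (C * N x))"
    using lower h
  proof eventually_elim
    case (elim x)
    then have "N x \<noteq> 0" using C by (auto simp: mult_le_0_iff)
    then show ?case using C by (simp add: field_simps)
  qed
  moreover have "(\<lambda>x. (C * (f x - K * h x) - K * (N x - C * h x)) * (1 / (C * N x)))
      \<in> O[F](\<lambda>x. e x * (1 / h x))"
  proof (rule landau_o.big.mult)
    show "(\<lambda>x. C * (f x - K * h x) - K * (N x - C * h x)) \<in> O[F](e)"
      using f N by (intro sum_in_bigo) simp_all
    have "\<forall>\<^sub>F x in F. norm (1 / (C * N x)) \<le> 2 / C^2 * norm (1 / h x)"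
      using lower h
    proof eventually_elim
      case (elim x)
      have pos: "0 < C / 2 * \<bar>h x\<bar>" using C elim(2) by simp
      then have "0 < \<bar>N x\<bar>" using elim(1) by linarith
      have "1 / (C * \<bar>N x\<bar>) \<le> 1 / (C * (C / 2 * \<bar>h x\<bar>))"
        using elim pos C \<open>0 < \<bar>N x\<bar>\<close> by (intro divide_left_mono mult_left_mono mult_pos_pos) simp_all
      also have "\<dots> = 2 / C^2 * (1 / \<bar>h x\<bar>)" by (simp add: power2_eq_square)
      finally show ?case using C by (simp add: abs_mult)
    qed
    then show "(\<lambda>x. 1 / (C * N x)) \<in> O[F](\<lambda>x. 1 / h x)" by (rule bigoI)
  qed
  ultimately show ?thesis by (simp add: landau_o.big.in_cong)
qed

lemma gam_minus_lam: "gam al - lam al = sqrt (real al ^ 2 + 4)"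
  and gam_plus_lam: "gam al + lam al = real al"
  by (simp_all add: gam_def lam_def field_simps)

lemma gam_times_lam: "gam al * lam al = -1"
proof -
  have "gam al * lam al = (real al ^ 2 - sqrt (real al ^ 2 + 4) ^ 2) / 4"
    by (simp add: gam_def lam_def power2_eq_square algebra_simps)
  then show ?thesis by simp
qed

lemma gam_sq: "gam al ^ 2 = real al * gam al + 1"
proof -
  have "gam al ^ 2 = gam al * (gam al + lam al) - gam al * lam al" by (simp add: power2_eq_square algebra_simps)
  then show ?thesis by (simp add: gam_plus_lam gam_times_lam mult.commute)
qed

lemma lam_sq: "lam al ^ 2 = real al * lam al + 1"
proof -
  have "lam al ^ 2 = lam al * (gam al + lam al) - gam al * lam al" by (simp add: power2_eq_square algebra_simps)
  then show ?thesis by (simp add: gam_plus_lam gam_times_lam mult.commute)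
qed

context
  fixes al :: nat
  assumes al: "1 \<le> al"
begin

lemma gam_gt_al: "real al < gam al"
proof -
  have "sqrt ((real al)^2) < sqrt (real al ^ 2 + 4)" by (intro real_sqrt_less_mono) simp
  then show ?thesis by (simp add: gam_def)
qed

lemma gam_gt_1: "1 < gam al"
  using gam_gt_al al by linarith

lemma gam_minus_lam_gt_2: "2 < gam al - lam al"
proof -
  have "(2::real)^2 < real al ^ 2 + 4" using al by simp
  then show ?thesis unfolding gam_minus_lam by (rule real_less_rsqrt)
qed

lemma lam_eq: "lam al = - 1 / gam al"
  using gam_times_lam[of al] gam_gt_1 by (simp add: field_simps)

lemma abs_lam_lt_1: "\<bar>lam al\<bar> < 1"
  using gam_gt_1 by (simp add: lam_eq abs_div)

lemma gfib_binet: "real (gfib al k) = (gam al ^ k - lam al ^ k) / (gam al - lam al)"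
proof (induction k rule: induct_nat_012)
  case (ge2 k)
  have "real (gfib al (Suc (Suc k))) = real al * real (gfib al (Suc k)) + real (gfib al k)" by simp
  also have "\<dots> = (real al * (gam al ^ Suc k - lam al ^ Suc k) + (gam al ^ k - lam al ^ k))
      / (gam al - lam al)"
    unfolding ge2 by (simp only: times_divide_eq_right add_divide_distrib)
  also have "\<dots> = (gam al ^ k * (real al * gam al + 1) - lam al ^ k * (real al * lam al + 1))
      / (gam al - lam al)"
    by (simp add: algebra_simps)
  also have "\<dots> = (gam al ^ Suc (Suc k) - lam al ^ Suc (Suc k)) / (gam al - lam al)"
    by (simp flip: gam_sq lam_sq add: power2_eq_square)
  finally show ?case .
qed (use gam_minus_lam_gt_2 in simp_all)

lemma gfib_approx: "\<bar>real (gfib al k) - gam al ^ k / (gam al - lam al)\<bar> \<le> 1"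
proof -
  have "\<bar>lam al ^ k\<bar> \<le> 1" using abs_lam_lt_1 by (simp add: power_abs power_le_one)
  then have "\<bar>lam al ^ k / (gam al - lam al)\<bar> \<le> 1"
    using gam_minus_lam_gt_2 by (simp add: abs_div divide_le_eq)
  then show ?thesis by (simp add: gfib_binet diff_divide_distrib)
qed

lemma gfib_le_gam_pow: "real (gfib al k) \<le> gam al ^ k"
proof -
  have "\<bar>lam al ^ k\<bar> \<le> 1" using abs_lam_lt_1 by (simp add: power_abs power_le_one)
  moreover have "1 \<le> gam al ^ k" using gam_gt_1 by (simp add: one_le_power)
  ultimately have "gam al ^ k - lam al ^ k \<le> 2 * gam al ^ k" by linarith
  also have "\<dots> \<le> (gam al - lam al) * gam al ^ k"
    using gam_minus_lam_gt_2 \<open>1 \<le> gam al ^ k\<close> by (intro mult_right_mono) simp_all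
  finally show ?thesis using gam_minus_lam_gt_2 by (simp add: gfib_binet divide_le_eq mult.commute)
qed

lemma gfib_combination_approx:
  "\<bar>(real al * real (gfib al (Suc j)) - real p * real (gfib al j))
     - (real al * gam al - real p) * gam al ^ j / (gam al - lam al)\<bar> \<le> real al + real p"
proof -
  define g d where "g = gam al" and "d = gam al - lam al"
  have d: "0 < d" using gam_minus_lam_gt_2 by (simp add: d_def)
  have eA: "\<bar>real (gfib al j) - g ^ j / d\<bar> \<le> 1" and eB: "\<bar>real (gfib al (Suc j)) - g ^ Suc j / d\<bar> \<le> 1"
    unfolding g_def d_def by (rule gfib_approx)+
  have "(real al * real (gfib al (Suc j)) - real p * real (gfib al j)) - (real al * g - real p) * g ^ j / d
      = real al * (real (gfib al (Suc j)) - g ^ Suc j / d) - real p * (real (gfib al j) - g ^ j / d)"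
    using d by (simp add: field_simps)
  also have "\<bar>\<dots>\<bar> \<le> real al * 1 + real p * 1"
    using eA eB
    by (intro abs_triangle_ineq4[THEN order.trans] add_mono) (simp_all only: abs_mult abs_of_nat mult_left_mono of_nat_0_le_iff)
  finally show ?thesis by (simp add: g_def d_def)
qed

lemma filterlim_gam_pow: "filterlim (\<lambda>n. gam al ^ n) at_top sequentially"
  using filterlim_at_infinity_imp_norm_at_top[OF filterlim_realpow_sequentially_gt1[of "gam al"]]
    gam_gt_1 by simp

lemma ncr_bounds:
  assumes "0 \<le> c"
  shows "c / (gam al - lam al)^2 * gam al ^ (2 * r + 1) - 1 < real (ncr al c r)"
    and "real (ncr al c r) \<le> c / (gam al - lam al)^2 * gam al ^ (2 * r + 1)"
proof -
  have "0 \<le> c / (gam al - lam al)^2 * gam al ^ (2 * r + 1)"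
    using assms gam_gt_1 by simp
  then have "real (ncr al c r) = of_int \<lfloor>c / (gam al - lam al)^2 * gam al ^ (2 * r + 1)\<rfloor>"
    by (simp add: ncr_def)
  then show "c / (gam al - lam al)^2 * gam al ^ (2 * r + 1) - 1 < real (ncr al c r)"
    and "real (ncr al c r) \<le> c / (gam al - lam al)^2 * gam al ^ (2 * r + 1)"
    by linarith+
qed

lemma gfib_shift_approx:
  "\<bar>real (gfib al (n + k)) - gam al ^ k / (gam al - lam al) * gam al ^ n\<bar> \<le> 1"
  using gfib_approx[of "n + k"] by (simp add: power_add mult.commute)

lemma gfib_prod_shift_approx:
  "\<bar>real (gfib al (n + i)) * real (gfib al (n + k))
      - gam al ^ (i + k) / (gam al - lam al)^2 * (gam al ^ n)^2\<bar>
    \<le> (gam al ^ i + gam al ^ k) / (gam al - lam al) * gam al ^ n + 1"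
proof -
  let ?g = "gam al" and ?d = "gam al - lam al"
  have pos: "0 < ?g" "0 < ?d" using gam_gt_1 gam_minus_lam_gt_2 by simp_all
  have "\<bar>real (gfib al (n + i)) * real (gfib al (n + k))
      - (?g ^ i / ?d * ?g ^ n) * (?g ^ k / ?d * ?g ^ n)\<bar>
      \<le> \<bar>?g ^ i / ?d * ?g ^ n\<bar> * 1 + \<bar>?g ^ k / ?d * ?g ^ n\<bar> * 1 + 1 * 1"
    by (rule abs_mult_approx[OF gfib_shift_approx gfib_shift_approx])
  moreover have "(?g ^ i / ?d * ?g ^ n) * (?g ^ k / ?d * ?g ^ n) = ?g ^ (i + k) / ?d^2 * (?g ^ n)^2"
    by (simp add: power_add power2_eq_square)
  moreover have "\<bar>?g ^ i / ?d * ?g ^ n\<bar> * 1 + \<bar>?g ^ k / ?d * ?g ^ n\<bar> * 1 + 1 * 1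
      = (?g ^ i + ?g ^ k) / ?d * ?g ^ n + 1"
    using pos by (simp add: add_divide_distrib algebra_simps)
  ultimately show ?thesis by simp
qed

end

context
  fixes al p :: nat
  assumes al: "1 \<le> al" and p_le: "p \<le> al ^ 2"
begin

lemma card_Sp_reps_approx:
  "\<exists>C. \<forall>j. \<bar>real (card (Sp_reps al p j))
      - (real al * gam al - real p)^2 / (2 * real al * (gam al - lam al)^2) * gam al ^ (2 * j)\<bar>
      \<le> C * gam al ^ j"
proof -
  define g d u E where "g = gam al" and "d = gam al - lam al" and "u = real al * g - real p"
    and "E = real al + real p"
  have g: "1 < g" and d: "0 < d" and alpos: "0 < real al" and E: "0 \<le> E"
    using gam_gt_1[OF al] gam_minus_lam_gt_2[OF al] al by (simp_all add: g_def d_def E_def)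
  have "\<bar>real (card (Sp_reps al p j)) - u^2 / (2 * real al * d^2) * g ^ (2 * j)\<bar>
      \<le> (real al * g + (2 * \<bar>u\<bar> / d + E) * E / (2 * real al)) * g ^ j" for j
  proof -
    let ?A = "gfib al j" and ?B = "gfib al (Suc j)"
    define x x0 where "x = real al * real ?B - real p * real ?A" and "x0 = u * g ^ j / d"
    have gj: "1 \<le> g ^ j" using g by (simp add: one_le_power)
    have ex: "\<bar>x - x0\<bar> \<le> E"
      using gfib_combination_approx[OF al] by (simp add: x_def x0_def u_def g_def d_def E_def)
    have "\<bar>x * x - x0 * x0\<bar> \<le> \<bar>x0\<bar> * E + \<bar>x0\<bar> * E + E * E"
      by (rule abs_mult_approx[OF ex ex])
    also have "\<dots> = (2 * \<bar>u\<bar> / d * g ^ j + E) * E"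
      using d g by (simp add: x0_def abs_mult algebra_simps)
    also have "\<dots> \<le> (2 * \<bar>u\<bar> / d + E) * E * g ^ j"
      using d E gj mult_left_mono[OF gj, of "E * E"] by (simp add: algebra_simps)
    finally have "\<bar>x * x - x0 * x0\<bar> / (2 * real al) \<le> (2 * \<bar>u\<bar> / d + E) * E / (2 * real al) * g ^ j"
      using alpos by (simp add: divide_right_mono)
    moreover have "\<bar>x * x - x0 * x0\<bar> / (2 * real al)
        = \<bar>x^2 / (2 * real al) - u^2 / (2 * real al * d^2) * g ^ (2 * j)\<bar>"
      unfolding power_even_eq using alpos d by (simp add: x0_def power2_eq_square abs_divide field_simps)
    ultimately have sq: "\<bar>x^2 / (2 * real al) - u^2 / (2 * real al * d^2) * g ^ (2 * j)\<bar>
        \<le> (2 * \<bar>u\<bar> / d + E) * E / (2 * real al) * g ^ j" by simp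
    have "p * ?A \<le> al * (al * ?A)"
      using mult_le_mono1[OF p_le, of ?A] by (simp add: power2_eq_square)
    also have "\<dots> \<le> al * ?B" using al_gfib_le_gfib_Suc[of al j] by simp
    finally have P: "p * ?A \<le> al * ?B" .
    have "\<bar>real (card (Sp_reps al p j)) - x^2 / (2 * real al)\<bar> \<le> real al * (real ?B + 1) / 2"
      using sum_truncated_linear_approx[OF al P] by (simp add: card_Sp_reps x_def)
    also have "\<dots> \<le> real al * (g * g ^ j)"
    proof -
      have "real ?B \<le> g * g ^ j" using gfib_le_gam_pow[OF al, of "Suc j"] by (simp add: g_def)
      moreover have "1 * 1 \<le> g * g ^ j" using gj g by (intro mult_mono) simp_all
      ultimately have "real ?B + 1 \<le> 2 * (g * g ^ j)" by linarith
      then show ?thesis using alpos by simp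
    qed
    finally show ?thesis using sq by (simp add: algebra_simps)
  qed
  then show ?thesis unfolding u_def g_def d_def by blast
qed

lemma sum_card_Sp_reps_asymp:
  "(\<lambda>n. real (\<Sum>j = 1..n. card (Sp_reps al p j))
      - (1 - real p / (real al * gam al))^2 / (2 * (gam al - lam al)^2) * gam al ^ (2 * n + 3))
    \<in> O(\<lambda>n. gam al ^ n)"
proof -
  define g d u where "g = gam al" and "d = gam al - lam al" and "u = real al * g - real p"
  define c K where "c = u^2 / (2 * real al * d^2)" and "K = (1 - real p / (real al * g))^2 / (2 * d^2)"
  have g: "1 < g" and d: "0 < d" and alpos: "0 < real al" and g2: "g^2 - 1 = real al * g"
    using gam_gt_1[OF al] gam_minus_lam_gt_2[OF al] al gam_sq[of al] by (simp_all add: g_def d_def)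
  obtain C where C: "\<And>j. \<bar>real (card (Sp_reps al p j)) - c * g ^ (2 * j)\<bar> \<le> C * g ^ j"
    using card_Sp_reps_approx unfolding c_def u_def g_def d_def by blast
  then have C0: "0 \<le> C" using order.trans[OF abs_ge_zero C[of 0]] by simp
  have sum_W: "(\<Sum>j = 1..n. c * g ^ (2 * j)) = K * g ^ (2 * n + 3) - K * g ^ 3" for n
  proof -
    have S: "(\<Sum>j = 1..n. (g^2) ^ j) * (real al * g) = (g^2) ^ Suc n - g^2"
      using sum_powers_times_diff[of "g^2" n] by (simp add: g2)
    have c: "c = K * g * (real al * g)"
      using alpos g d by (simp add: K_def c_def u_def field_simps power2_eq_square)
    have "(\<Sum>j = 1..n. c * g ^ (2 * j)) = K * g * ((\<Sum>j = 1..n. (g^2) ^ j) * (real al * g))"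
      unfolding c power_mult by (simp add: sum_distrib_left sum_distrib_right mult_ac)
    also have "\<dots> = K * (g * (g^2) ^ Suc n) - K * (g * g^2)" unfolding S by (simp add: algebra_simps)
    moreover have "g * (g^2) ^ Suc n = g ^ (2 * n + 3)" "g * g^2 = g ^ 3"
      by (simp_all only: power_mult[symmetric] power_Suc[symmetric])
        (simp_all add: power_add power3_eq_cube mult_ac)
    ultimately show ?thesis by simp
  qed
  have "\<bar>real (\<Sum>j = 1..n. card (Sp_reps al p j)) - K * g ^ (2 * n + 3)\<bar>
      \<le> (C * g / (g - 1) + K * g ^ 3) * g ^ n" (is "?err n \<le> ?C * _") for n
  proof -
    have "\<bar>real (\<Sum>j = 1..n. card (Sp_reps al p j)) - (\<Sum>j = 1..n. c * g ^ (2 * j))\<bar>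
        \<le> (\<Sum>j = 1..n. C * g ^ j)"
      unfolding of_nat_sum sum_subtractf[symmetric] by (rule order.trans[OF sum_abs sum_mono[OF C]])
    also have "\<dots> \<le> C * g / (g - 1) * g ^ n"
      using mult_left_mono[OF sum_powers_le[OF g] C0] by (simp add: sum_distrib_left mult.assoc)
    finally have "\<bar>real (\<Sum>j = 1..n. card (Sp_reps al p j)) - (K * g ^ (2 * n + 3) - K * g ^ 3)\<bar>
        \<le> C * g / (g - 1) * g ^ n"
      unfolding sum_W .
    moreover have K3: "0 \<le> K * g ^ 3" using g by (simp add: K_def)
    ultimately have "\<bar>real (\<Sum>j = 1..n. card (Sp_reps al p j)) - K * g ^ (2 * n + 3)\<bar>
        \<le> C * g / (g - 1) * g ^ n + K * g ^ 3"
      unfolding abs_le_iff by linarith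
    moreover have "K * g ^ 3 \<le> K * g ^ 3 * g ^ n"
      using mult_left_mono[OF one_le_power K3, of g n] g by simp
    ultimately show ?thesis by (simp add: algebra_simps)
  qed
  then have "\<forall>\<^sub>F n in sequentially. ?err n \<le> ?C * norm (g ^ n)"
    using g by (intro always_eventually allI) simp
  then show ?thesis unfolding K_def g_def d_def by (intro bigoI) simp
qed

end

context
  fixes al p :: nat and c :: real
  assumes al: "1 \<le> al" and p1: "1 \<le> p" and p_le: "p \<le> al ^ 2"
    and c1: "1 \<le> c" and c_le: "c \<le> real p * gam al / real al"
begin

lemma ncr_Suc_lower:
  "gam al ^ 3 / (gam al - lam al)^2 * (gam al ^ n)^2 - 1 < real (ncr al c (Suc n))"
proof -
  have "gam al ^ 3 / (gam al - lam al)^2 * (gam al ^ n)^2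
      \<le> c / (gam al - lam al)^2 * gam al ^ (2 * Suc n + 1)"
    using c1 gam_gt_1[OF al]
    by (simp add: power_add power_mult_distrib[symmetric] power_mult[symmetric] divide_right_mono
        mult_right_mono mult.commute[of 2] numeral_3_eq_3)
  then show ?thesis using ncr_bounds(1)[OF al, of c "Suc n"] c1 by linarith
qed

lemma al_ncr_Suc_upper:
  "real al * real (ncr al c (Suc n)) \<le> real p * gam al ^ 4 / (gam al - lam al)^2 * (gam al ^ n)^2"
proof -
  have "real al * c \<le> real p * gam al" using c_le al by (simp add: field_simps)
  have "real al * real (ncr al c (Suc n))
      \<le> real al * (c / (gam al - lam al)^2 * gam al ^ (2 * Suc n + 1))"
    using ncr_bounds(2)[OF al, of c "Suc n"] c1 by (intro mult_left_mono) simp_all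
  also have "\<dots> \<le> real p * gam al / (gam al - lam al)^2 * gam al ^ (2 * Suc n + 1)"
    using \<open>real al * c \<le> _\<close> gam_gt_1[OF al]
    by (simp add: divide_right_mono mult_right_mono mult.assoc[symmetric])
  also have "\<dots> = real p * gam al ^ 4 / (gam al - lam al)^2 * (gam al ^ n)^2"
    by (simp add: power_add power_mult[symmetric] mult.commute[of 2] numeral_eq_Suc field_simps)
  finally show ?thesis .
qed

lemma eventually_ncr_Suc_ge:
  "\<forall>\<^sub>F n in sequentially. n + 1 \<le> ncr al c (Suc n)"
proof -
  have "0 < gam al ^ 3 / (gam al - lam al)^2"
    using gam_gt_1[OF al] gam_minus_lam_gt_2[OF al] by simp
  from eventually_less_quadratic[OF filterlim_gam_pow[OF al] this, of "gam al ^ 2" 1]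
  show ?thesis
  proof eventually_elim
    case (elim n)
    have "n + 1 \<le> gfib al (n + 2)" using gfib_Suc_ge[OF al, of "n + 1"] by simp
    then have "real (n + 1) \<le> real (gfib al (n + 2))" by (simp only: of_nat_le_iff)
    also have "\<dots> \<le> gam al ^ (n + 2)" by (rule gfib_le_gam_pow[OF al])
    also have "\<dots> = gam al ^ 2 * gam al ^ n" by (simp add: power_add power2_eq_square)
    finally have "real (n + 1) \<le> gam al ^ 2 * gam al ^ n" .
    then show ?case using elim ncr_Suc_lower[of n] by simp
  qed
qed

lemma eventually_ncr_Suc_ge_gfib_prod:
  "\<forall>\<^sub>F n in sequentially. gfib al n * gfib al (Suc n) \<le> ncr al c (Suc n)"
proof -
  define g d where "g = gam al" and "d = gam al - lam al"
  have g: "1 < g" and d: "0 < d" using gam_gt_1[OF al] gam_minus_lam_gt_2[OF al] by (simp_all add: g_def d_def)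
  have "g * 1 < g * g^2" using g by (intro mult_strict_left_mono) (simp_all add: one_less_power)
  then have "0 < (g^3 - g) / d^2" using d by (simp add: power3_eq_cube power2_eq_square)
  from eventually_less_quadratic[OF filterlim_gam_pow[OF al] this, of "(1 + g) / d" 2]
  show ?thesis
  proof eventually_elim
    case (elim n)
    have "real (gfib al (n + 0)) * real (gfib al (n + 1)) \<le> g / d^2 * (g ^ n)^2 + (1 + g) / d * g ^ n + 1"
      using gfib_prod_shift_approx[OF al, of n 0 1] by (simp add: g_def d_def abs_le_iff algebra_simps)
    also have "\<dots> < g ^ 3 / d^2 * (g ^ n)^2 - 1"
      using elim by (simp add: g_def algebra_simps diff_divide_distrib)
    also have "\<dots> < real (ncr al c (Suc n))" using ncr_Suc_lower[of n] by (simp add: g_def d_def)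
    finally have "real (gfib al n * gfib al (Suc n)) < real (ncr al c (Suc n))" by simp
    then show ?case by (simp only: of_nat_less_iff less_imp_le)
  qed
qed


lemma eventually_top_level_small:
  "\<forall>\<^sub>F n in sequentially. al * ncr al c (Suc n) < (p * gfib al (Suc n) + p + 2) * gfib al (n + 3)"
proof -
  define g d where "g = gam al" and "d = gam al - lam al"
  have g: "1 < g" and d: "0 < d" using gam_gt_1[OF al] gam_minus_lam_gt_2[OF al] by (simp_all add: g_def d_def)
  have "real p \<le> real al ^ 2" using p_le by (simp flip: of_nat_power)
  also have "\<dots> \<le> g ^ 2" using gam_gt_al[OF al] by (simp add: g_def power_mono)
  finally have "real p * g \<le> g ^ 2 * g" using g by (intro mult_right_mono) simp_all
  moreover have "0 < g ^ 3" using g by simp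
  ultimately have "0 < (2 * g ^ 3 - real p * g) / d" using d by (simp add: power2_eq_square power3_eq_cube)
  from eventually_less_linear[OF filterlim_gam_pow[OF al] this, of "2 * real p + 2"]
  show ?thesis
  proof eventually_elim
    case (elim n)
    define X P Q where "X = g ^ n" and "P = real (gfib al (n + 1)) * real (gfib al (n + 3))"
      and "Q = real (gfib al (n + 3))"
    have lin: "2 * real p + 2 < (2 * g ^ 3 - real p * g) / d * X" using elim by (simp only: X_def g_def)
    have "g ^ 4 / d^2 * X^2 - (g + g ^ 3) / d * X - 1 \<le> P"
      using gfib_prod_shift_approx[OF al, of n 1 3] by (simp add: X_def P_def g_def d_def abs_le_iff)
    then have "real p * (g ^ 4 / d^2 * X^2 - (g + g ^ 3) / d * X - 1) \<le> real p * P"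
      by (rule mult_left_mono) simp
    moreover have "g ^ 3 / d * X - 1 \<le> Q"
      using gfib_shift_approx[OF al, of n 3] by (simp add: X_def Q_def g_def d_def abs_le_iff)
    then have "(real p + 2) * (g ^ 3 / d * X - 1) \<le> (real p + 2) * Q"
      by (rule mult_left_mono) simp
    moreover have "real p * (g ^ 4 / d^2 * X^2 - (g + g ^ 3) / d * X - 1) + (real p + 2) * (g ^ 3 / d * X - 1)
        = real p * g ^ 4 / d^2 * X^2 + ((2 * g ^ 3 - real p * g) / d * X - (2 * real p + 2))"
      using d by (simp add: field_simps)
    moreover have "real al * real (ncr al c (Suc n)) \<le> real p * g ^ 4 / d^2 * X^2"
      using al_ncr_Suc_upper[of n] by (simp add: X_def g_def d_def)
    ultimately have "real al * real (ncr al c (Suc n)) < real p * P + (real p + 2) * Q"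
      using lin by linarith
    moreover have "real ((p * gfib al (Suc n) + p + 2) * gfib al (n + 3)) = real p * P + (real p + 2) * Q"
      by (simp add: P_def Q_def algebra_simps)
    ultimately show ?case by (simp only: of_nat_mult[symmetric] of_nat_less_iff)
  qed
qed

lemma eventually_beyond_levels_empty:
  "\<forall>\<^sub>F n in sequentially. al * ncr al c (Suc n) < p * gfib al (n + 2) * gfib al (n + 4)"
proof -
  define g d where "g = gam al" and "d = gam al - lam al"
  have g: "1 < g" and d: "0 < d" using gam_gt_1[OF al] gam_minus_lam_gt_2[OF al] by (simp_all add: g_def d_def)
  have "g ^ 4 * 1 < g ^ 4 * g ^ 2" using g by (intro mult_strict_left_mono) (simp_all add: one_less_power)
  then have "0 < (g ^ 6 - g ^ 4) / d^2" using d by (simp flip: power_add)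
  from eventually_less_quadratic[OF filterlim_gam_pow[OF al] this, of "(g ^ 2 + g ^ 4) / d" 1]
  show ?thesis
  proof eventually_elim
    case (elim n)
    define X P where "X = g ^ n" and "P = real (gfib al (n + 2)) * real (gfib al (n + 4))"
    have quad: "(g ^ 2 + g ^ 4) / d * X + 1 < (g ^ 6 - g ^ 4) / d^2 * X^2"
      using elim by (simp only: X_def g_def)
    have "g ^ 6 / d^2 * X^2 - (g ^ 2 + g ^ 4) / d * X - 1 \<le> P"
      using gfib_prod_shift_approx[OF al, of n 2 4] by (simp add: X_def P_def g_def d_def abs_le_iff)
    moreover have "g ^ 6 / d^2 * X^2 - (g ^ 6 - g ^ 4) / d^2 * X^2 = g ^ 4 / d^2 * X^2"
      using d by (simp add: field_simps)
    ultimately have "g ^ 4 / d^2 * X^2 < P" using quad by linarith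
    then have "real p * (g ^ 4 / d^2 * X^2) < real p * P" using p1 by (intro mult_strict_left_mono) simp_all
    moreover have "real al * real (ncr al c (Suc n)) \<le> real p * g ^ 4 / d^2 * X^2"
      using al_ncr_Suc_upper[of n] by (simp add: X_def g_def d_def)
    ultimately have "real (al * ncr al c (Suc n)) < real (p * gfib al (n + 2) * gfib al (n + 4))"
      by (simp add: P_def mult.assoc)
    then show ?case by (simp only: of_nat_less_iff)
  qed
qed

lemma gfib_prod_minus_ncr_le:
  "real (gfib al (Suc n) * gfib al (n + 2) - ncr al c (Suc n))
    \<le> ((gam al + gam al ^ 2) / (gam al - lam al) + 2) * gam al ^ n"
proof -
  define g d where "g = gam al" and "d = gam al - lam al"
  have g: "1 < g" and d: "0 < d" using gam_gt_1[OF al] gam_minus_lam_gt_2[OF al] by (simp_all add: g_def d_def)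
  have "real (gfib al (n + 1)) * real (gfib al (n + 2)) \<le> g ^ 3 / d^2 * (g ^ n)^2 + (g + g^2) / d * g ^ n + 1"
    using gfib_prod_shift_approx[OF al, of n 1 2] by (simp add: g_def d_def abs_le_iff power3_eq_cube del: gfib.simps)
  moreover have "g ^ 3 / d^2 * (g ^ n)^2 - 1 < real (ncr al c (Suc n))"
    using ncr_Suc_lower[of n] by (simp add: g_def d_def)
  moreover have "0 \<le> (g + g^2) / d * g ^ n" "1 \<le> g ^ n" using g d by (simp_all add: one_le_power)
  ultimately have "real (gfib al (Suc n) * gfib al (n + 2) - ncr al c (Suc n)) \<le> (g + g^2) / d * g ^ n + 2"
    by (cases "gfib al (Suc n) * gfib al (n + 2) \<le> ncr al c (Suc n)")
      (simp_all add: of_nat_diff del: gfib.simps)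
  also have "\<dots> \<le> ((g + g^2) / d + 2) * g ^ n" using \<open>1 \<le> g ^ n\<close> by (simp add: algebra_simps)
  finally show ?thesis by (simp add: g_def d_def)
qed

lemma card_Sp_minus_level_sum_le:
  assumes "n + 1 \<le> N" "gfib al n * gfib al (Suc n) \<le> N"
    and "al * N < (p * gfib al (Suc n) + p + 2) * gfib al (n + 3)"
    and "al * N < p * gfib al (n + 2) * gfib al (n + 4)"
    and N: "N = ncr al c (Suc n)"
  shows "\<bar>real (card (Sp al p \<inter> {1..N})) - real (\<Sum>j = 1..n. card (Sp_reps al p j))\<bar>
    \<le> (real al + (real p + 1) * gam al ^ 2 + gam al ^ 2 / (gam al - 1)
        + ((gam al + gam al ^ 2) / (gam al - lam al) + 2)) * gam al ^ n"
proof -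
  define g where "g = gam al"
  have g: "1 < g" using gam_gt_1[OF al] by (simp add: g_def)
  have X: "1 \<le> g ^ n" using g by (simp add: one_le_power)
  have up: "card (Sp al p \<inter> {1..N}) \<le> al + (\<Sum>j = 1..n. card (Sp_reps al p j)) + (p + 1) * gfib al (n + 2)"
    using card_Sp_le_sum_card_Sp_reps[OF al] assms(1,3,4) by simp
  have lo: "(\<Sum>j = 1..n. card (Sp_reps al p j)) \<le> card (Sp al p \<inter> {1..N})
      + (\<Sum>j = 1..n. gfib al (Suc j)) + (gfib al (Suc n) * gfib al (n + 2) - N)"
    using sum_card_Sp_reps_le[OF al, of n N p] assms(1,2) by simp
  have "real al * 1 \<le> real al * g ^ n" using X by (intro mult_left_mono) simp_all
  moreover have "real (gfib al (n + 2)) \<le> g ^ 2 * g ^ n"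
    using gfib_le_gam_pow[OF al, of "n + 2"] unfolding g_def power_add by (simp only: mult.commute)
  then have "(real p + 1) * real (gfib al (n + 2)) \<le> (real p + 1) * g ^ 2 * g ^ n"
    unfolding mult.assoc by (rule mult_left_mono) simp
  moreover have "(\<Sum>j = 1..n. real (gfib al (Suc j))) \<le> g ^ 2 / (g - 1) * g ^ n"
  proof -
    have "(\<Sum>j = 1..n. real (gfib al (Suc j))) \<le> (\<Sum>j = 1..n. g * g ^ j)"
      unfolding g_def power_Suc[symmetric] by (rule sum_mono) (rule gfib_le_gam_pow[OF al])
    also have "\<dots> = g * (\<Sum>j = 1..n. g ^ j)" by (simp add: sum_distrib_left)
    also have "\<dots> \<le> g * (g / (g - 1) * g ^ n)"
      using sum_powers_le[OF g, of n] g by (intro mult_left_mono) simp_all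
    finally show ?thesis by (simp add: power2_eq_square)
  qed
  moreover have "real (gfib al (Suc n) * gfib al (n + 2) - N) \<le> ((g + g ^ 2) / (gam al - lam al) + 2) * g ^ n"
    using gfib_prod_minus_ncr_le[of n] by (simp add: N g_def)
  moreover have "0 \<le> g ^ 2 / (g - 1) * g ^ n" "0 \<le> (g + g ^ 2) / (gam al - lam al) * g ^ n"
    "0 \<le> real p * g ^ 2 * g ^ n" "0 \<le> real al * g ^ n" "0 \<le> g ^ 2 * g ^ n" "0 \<le> g ^ n"
    "0 \<le> (\<Sum>j = 1..n. real (gfib al (Suc j)))" "0 \<le> real (gfib al (Suc n) * gfib al (n + 2) - N)"
    using g gam_minus_lam_gt_2[OF al] by (simp_all add: sum_nonneg)
  ultimately show ?thesis
    using of_nat_mono[OF up, where ?'a = real] of_nat_mono[OF lo, where ?'a = real]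
    unfolding g_def[symmetric] abs_le_iff distrib_right
    by (simp only: of_nat_add of_nat_mult of_nat_sum of_nat_1) linarith
qed

lemma card_Sp_minus_level_sum_bigo:
  "(\<lambda>n. real (card (Sp al p \<inter> {1..ncr al c (Suc n)})) - real (\<Sum>j = 1..n. card (Sp_reps al p j)))
    \<in> O(\<lambda>n. gam al ^ n)"
proof (rule bigoI)
  show "\<forall>\<^sub>F n in sequentially.
    norm (real (card (Sp al p \<inter> {1..ncr al c (Suc n)})) - real (\<Sum>j = 1..n. card (Sp_reps al p j)))
    \<le> (real al + (real p + 1) * gam al ^ 2 + gam al ^ 2 / (gam al - 1)
        + ((gam al + gam al ^ 2) / (gam al - lam al) + 2)) * norm (gam al ^ n)"
    using eventually_ncr_Suc_ge eventually_ncr_Suc_ge_gfib_prod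
      eventually_top_level_small eventually_beyond_levels_empty
  proof eventually_elim
    case (elim n)
    then show ?case using card_Sp_minus_level_sum_le[OF elim refl] gam_gt_1[OF al] by simp
  qed
qed

lemma Sp_density:
  shows "(\<lambda>r. real (card (Sp al p \<inter> {1..ncr al c r})) / real (ncr al c r)
            - (1/2) * (1/c) * (1 - real p / (real al * gam al))^2) \<in> O(\<lambda>r. 1 / gam al ^ r)"
proof -
  define g d K where "g = gam al" and "d = gam al - lam al"
    and "K = (1 - real p / (real al * g))^2 / (2 * d^2)"
  have g: "1 < g" and d: "0 < d" using gam_gt_1[OF al] gam_minus_lam_gt_2[OF al] by (simp_all add: g_def d_def)
  have cnt: "(\<lambda>n. real (card (Sp al p \<inter> {1..ncr al c (Suc n)})) - K * g ^ (2 * n + 3)) \<in> O(\<lambda>n. g ^ n)"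
    using sum_in_bigo(1)[OF card_Sp_minus_level_sum_bigo
        sum_card_Sp_reps_asymp[OF al p_le]]
    by (simp add: K_def g_def d_def)
  have "\<forall>\<^sub>F n in sequentially. norm (real (ncr al c (Suc n)) - c / d^2 * g ^ (2 * n + 3)) \<le> 1 * norm (g ^ n)"
  proof (intro always_eventually allI)
    fix n
    have e: "2 * Suc n + 1 = 2 * n + 3" by simp
    have "0 \<le> c" using c1 by simp
    then have "\<bar>real (ncr al c (Suc n)) - c / d^2 * g ^ (2 * n + 3)\<bar> \<le> 1"
      using ncr_bounds[OF al, of c "Suc n"] unfolding e g_def d_def abs_le_iff by linarith
    also have "1 \<le> norm (g ^ n)" using g by (simp add: one_le_power)
    finally show "norm (real (ncr al c (Suc n)) - c / d^2 * g ^ (2 * n + 3)) \<le> 1 * norm (g ^ n)" by simp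
  qed
  then have N: "(\<lambda>n. real (ncr al c (Suc n)) - c / d^2 * g ^ (2 * n + 3)) \<in> O(\<lambda>n. g ^ n)"
    by (rule bigoI)
  have ratio: "g ^ n / g ^ (2 * n + 3) = (1 / g) ^ n * (1 / g ^ 3)" for n
  proof -
    have "g ^ (2 * n + 3) = g ^ n * g ^ n * g ^ 3" by (simp only: power_add mult_2)
    then show ?thesis using g by (simp add: power_one_over)
  qed
  have "(\<lambda>n. (1 / g) ^ n * (1 / g ^ 3)) \<longlonglongrightarrow> 0"
    using g by (intro tendsto_mult_left_zero LIMSEQ_realpow_zero) simp_all
  then have small: "(\<lambda>n. g ^ n) \<in> o(\<lambda>n. g ^ (2 * n + 3))"
    using g by (intro smalloI_tendsto) (simp_all add: ratio)
  have "(\<lambda>n. real (card (Sp al p \<inter> {1..ncr al c (Suc n)})) / real (ncr al c (Suc n)) - K / (c / d^2))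
      \<in> O(\<lambda>n. g ^ n / g ^ (2 * n + 3))"
    using g d c1 by (intro quotient_bigo[OF cnt N small]) simp_all
  also have "(\<lambda>n. g ^ n / g ^ (2 * n + 3)) = (\<lambda>n. 1 / g ^ 3 * (1 / g) ^ n)"
    by (intro ext) (subst ratio, rule mult.commute)
  also have "(\<lambda>n. 1 / g ^ 3 * (1 / g) ^ n) = (\<lambda>n. 1 / g ^ 2 * (1 / g ^ Suc n))"
    using g by (intro ext) (simp add: power_one_over power3_eq_cube power2_eq_square)
  also have "(\<lambda>n. 1 / g ^ 2 * (1 / g ^ Suc n)) \<in> O(\<lambda>n. 1 / g ^ Suc n)"
    by (subst landau_o.big.cmult_in_iff) (use g in simp_all)
  finally have "(\<lambda>n. real (card (Sp al p \<inter> {1..ncr al c (Suc n)})) / real (ncr al c (Suc n))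
      - (1/2) * (1/c) * (1 - real p / (real al * g))^2) \<in> O(\<lambda>n. 1 / g ^ Suc n)"
    using d c1 by (simp add: K_def field_simps)
  then show ?thesis unfolding g_def by (rule bigo_sequentially_of_Suc)
qed

end

theorem corollary1p5:
  fixes al p :: nat and c :: real
  assumes "1 \<le> al"
  shows "(1 \<le> p \<and> p \<le> al ^ 2 \<and> 1 \<le> c \<and> c \<le> real p * gam al / real al \<longrightarrow>
          (\<lambda>r. real (card (Sp al p \<inter> {1..ncr al c r})) / real (ncr al c r)
                 - (1/2) * (1/c) * (1 - real p / (real al * gam al))^2)
            \<in> O(\<lambda>r. 1 / gam al ^ r))
       \<and> (1 \<le> c \<and> c \<le> real al * gam al \<longrightarrow>
          (\<lambda>r. real (card (Sp al (al ^ 2) \<inter> {1..ncr al c r})) / real (ncr al c r)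
                 - (1/2) * (1/c) * (1 / gam al ^ 4))
            \<in> O(\<lambda>r. 1 / gam al ^ r))"
proof (intro conjI impI)
  assume "1 \<le> p \<and> p \<le> al ^ 2 \<and> 1 \<le> c \<and> c \<le> real p * gam al / real al"
  then show "(\<lambda>r. real (card (Sp al p \<inter> {1..ncr al c r})) / real (ncr al c r)
      - (1/2) * (1/c) * (1 - real p / (real al * gam al))^2) \<in> O(\<lambda>r. 1 / gam al ^ r)"
    using Sp_density[OF assms] by blast
next
  assume c: "1 \<le> c \<and> c \<le> real al * gam al"
  have g: "0 < gam al" and al: "0 < real al" using gam_gt_1[OF assms] assms by simp_all
  have "gam al - real al = 1 / gam al"
    using gam_sq[of al] g by (simp add: field_simps power2_eq_square)
  moreover have "1 - real (al ^ 2) / (real al * gam al) = (gam al - real al) / gam al"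
    using g al by (simp add: field_simps power2_eq_square)
  ultimately have "1 - real (al ^ 2) / (real al * gam al) = 1 / gam al ^ 2"
    by (simp add: power2_eq_square)
  then have "(1 - real (al ^ 2) / (real al * gam al))^2 = 1 / gam al ^ 4"
    by (simp add: power_one_over flip: power_mult)
  moreover have "c \<le> real (al ^ 2) * gam al / real al" using c al by (simp add: power2_eq_square)
  ultimately show "(\<lambda>r. real (card (Sp al (al ^ 2) \<inter> {1..ncr al c r})) / real (ncr al c r)
      - (1/2) * (1/c) * (1 / gam al ^ 4)) \<in> O(\<lambda>r. 1 / gam al ^ r)"
    using Sp_density[OF assms _ order_refl] c assms by simp
qed

end
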